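(* Let $k,l\geq 1$ be integers. Then $K(\mathbb{Z}_{2^l}^{2^k})$ is the trivial subgroup $\{(0,0,\dots,0)\}$ of $\mathbb{Z}_{2^l}^{2^k}$.
   Context: For integers $m\ge 2$, $n\ge 2$, the Ducci function $D:\mathbb{Z}_m^n\to\mathbb{Z}_m^n$ is $D(x_1,\dots,x_n)=(x_1+x_2 \bmod m,\dots,x_{n-1}+x_n\bmod m,x_n+x_1\bmod m)$. The Ducci cycle of $\mathbf{u}\in\mathbb{Z}_m^n$ is the set of $\mathbf{v}$ such that there exist integers $\alpha\ge 0$, $\beta\ge 1$ with $\mathbf{v}=D^{\alpha+\beta}(\mathbf{u})=D^{\alpha}(\mathbf{u})$. $K(\mathbb{Z}_m^n)$ denotes the set of all tuples in $\mathbb{Z}_m^n$ lying in the Ducci cycle of some $\mathbf{u}\in\mathbb{Z}_m^n$. *)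

theory Defs
  imports Main
begin

text \<open>Tuples in Z_m^n are represented as functions nat => nat with entries
  in {0..<m} on the indices {0..<n} (0-based) and 0 outside.\<close>

definition tuples :: "nat \<Rightarrow> nat \<Rightarrow> (nat \<Rightarrow> nat) set" where
  "tuples m n = {x. (\<forall>i<n. x i < m) \<and> (\<forall>i\<ge>n. x i = 0)}"

definition ducci :: "nat \<Rightarrow> nat \<Rightarrow> (nat \<Rightarrow> nat) \<Rightarrow> (nat \<Rightarrow> nat)" where
  "ducci m n x = (\<lambda>i. if i < n then (x i + x (Suc i mod n)) mod m else 0)"

definition ducci_cycle :: "nat \<Rightarrow> nat \<Rightarrow> (nat \<Rightarrow> nat) \<Rightarrow> (nat \<Rightarrow> nat) set" where
  "ducci_cycle m n u = {v. \<exists>\<alpha> \<beta>. \<beta> \<ge> 1 \<and>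
      v = (ducci m n ^^ (\<alpha> + \<beta>)) u \<and> v = (ducci m n ^^ \<alpha>) u}"

definition K :: "nat \<Rightarrow> nat \<Rightarrow> (nat \<Rightarrow> nat) set" where
  "K m n = (\<Union>u\<in>tuples m n. ducci_cycle m n u)"

end

theory Submission
  imports Defs
begin

text \<open>Extend a tuple periodically to an integer sequence and iterate \<open>seq_ducci = 1 + S\<close>
  without reduction, where \<open>S\<close> is the shift. Modulo 2 squaring is additive, so
  \<open>seq_ducci^2^k \<equiv> 1 + S^2^k\<close>, and on a sequence of period \<open>2^k\<close> this is multiplication by 2.
  Applied to \<open>x / d\<close>, where \<open>d\<close> divides every entry, it shows that each block of \<open>2^k\<close> steps
  gains a factor 2, so after \<open>2^k * l\<close> steps every tuple over \<open>\<int>/2^l\<close> is zero. A tuple that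
  reaches the fixed point 0 can only cycle through 0.\<close>

definition seq_ducci :: "(nat \<Rightarrow> int) \<Rightarrow> nat \<Rightarrow> int" where
  "seq_ducci x i = x i + x (Suc i)"

lemma seq_ducci_funpow_Suc:
  "(seq_ducci ^^ Suc t) x i = (seq_ducci ^^ t) x i + (seq_ducci ^^ t) x (Suc i)"
  by (simp add: seq_ducci_def)

lemma seq_ducci_funpow_scale:
  "(seq_ducci ^^ t) (\<lambda>i. c * x i) = (\<lambda>i. c * (seq_ducci ^^ t) x i)"
  by (induction t) (auto simp: seq_ducci_def algebra_simps)

lemma seq_ducci_funpow_periodic:
  assumes "\<And>i. x (i + n) = x i"
  shows "(seq_ducci ^^ t) x (i + n) = (seq_ducci ^^ t) x i"
proof (induction t arbitrary: i)
  case (Suc t)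
  show ?case
    using Suc.IH[of i] Suc.IH[of "Suc i"] by (simp add: seq_ducci_def)
qed (simp add: assms)

lemma seq_ducci_funpow_two_power_even:
  "even ((seq_ducci ^^ 2 ^ k) x i - x i - x (i + 2 ^ k))"
proof (induction k arbitrary: x i)
  case 0
  then show ?case by (simp add: seq_ducci_def)
next
  case (Suc k)
  let ?m = "2 ^ k :: nat"
  let ?A = "seq_ducci ^^ ?m"
  have double: "(2 ^ Suc k :: nat) = ?m + ?m"
    by simp
  have "?A (?A x) i - x i - x (i + 2 ^ Suc k) =
      (?A (?A x) i - ?A x i - ?A x (i + ?m)) + (?A x i - x i - x (i + ?m))
      + (?A x (i + ?m) - x (i + ?m) - x (i + ?m + ?m)) + 2 * x (i + ?m)"
    unfolding double by (simp only: add.assoc)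
  also have "even \<dots>"
    using Suc.IH by (intro dvd_add dvd_triv_left)
  finally show ?case
    unfolding double funpow_add by simp
qed

lemma seq_ducci_funpow_two_power_dvd:
  assumes "\<And>i. d dvd x i"
  shows "2 * d dvd (seq_ducci ^^ 2 ^ k) x i - x i - x (i + 2 ^ k)"
proof -
  define y where "y i = x i div d" for i
  have x_eq: "x = (\<lambda>i. d * y i)"
    using assms by (auto simp: y_def)
  have "(seq_ducci ^^ 2 ^ k) x i - x i - x (i + 2 ^ k)
      = d * ((seq_ducci ^^ 2 ^ k) y i - y i - y (i + 2 ^ k))"
    by (simp add: x_eq seq_ducci_funpow_scale algebra_simps)
  then show ?thesis
    using seq_ducci_funpow_two_power_even[of k y i] by (auto simp: mult.commute)
qed

lemma periodic_seq_ducci_two_power_dvd: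
  assumes "\<And>i. x (i + 2 ^ k) = x i" and "\<And>i. d dvd x i"
  shows "2 * d dvd (seq_ducci ^^ 2 ^ k) x i"
proof -
  have split: "(seq_ducci ^^ 2 ^ k) x i = ((seq_ducci ^^ 2 ^ k) x i - x i - x (i + 2 ^ k)) + 2 * x i"
    using assms(1) by simp
  have "2 * d dvd 2 * x i"
    by (rule mult_dvd_mono[OF dvd_refl assms(2)])
  then show ?thesis
    by (subst split) (rule dvd_add[OF seq_ducci_funpow_two_power_dvd[OF assms(2)]])
qed

lemma periodic_seq_ducci_pow_dvd:
  assumes "\<And>i. x (i + 2 ^ k) = x i"
  shows "(2::int) ^ j dvd (seq_ducci ^^ (2 ^ k * j)) x i"
proof (induction j arbitrary: i)
  case (Suc j)
  have "seq_ducci ^^ (2 ^ k * Suc j) = (seq_ducci ^^ 2 ^ k) \<circ> (seq_ducci ^^ (2 ^ k * j))"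
    by (simp add: funpow_add[symmetric])
  moreover have "2 * 2 ^ j dvd (seq_ducci ^^ 2 ^ k) ((seq_ducci ^^ (2 ^ k * j)) x) i"
    using seq_ducci_funpow_periodic[of x "2 ^ k" "2 ^ k * j", OF assms] Suc.IH
    by (rule periodic_seq_ducci_two_power_dvd)
  ultimately show ?case
    by simp
qed simp

lemma ducci_funpow_eq_seq_ducci_mod:
  assumes "u \<in> tuples m n" and "i < n"
  shows "int ((ducci m n ^^ t) u i) = (seq_ducci ^^ t) (\<lambda>j. int (u (j mod n))) i mod int m"
  using assms(2)
proof (induction t arbitrary: i)
  case 0
  then show ?case
    using assms(1) by (simp add: tuples_def)
next
  case (Suc t)
  let ?x = "\<lambda>j. int (u (j mod n))"
  have wrap: "(seq_ducci ^^ t) ?x (Suc i mod n) = (seq_ducci ^^ t) ?x (Suc i)"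
  proof (cases "Suc i < n")
    case False
    then have "Suc i = n"
      using Suc.prems by simp
    then show ?thesis
      using seq_ducci_funpow_periodic[of ?x n t 0] by simp
  qed simp
  have "int ((ducci m n ^^ Suc t) u i) =
      (int ((ducci m n ^^ t) u i) + int ((ducci m n ^^ t) u (Suc i mod n))) mod int m"
    using Suc.prems by (simp add: ducci_def zmod_int)
  also have "\<dots> = ((seq_ducci ^^ t) ?x i + (seq_ducci ^^ t) ?x (Suc i)) mod int m"
    using Suc.IH Suc.prems wrap by (simp add: mod_add_eq)
  finally show ?case
    by (simp only: seq_ducci_funpow_Suc)
qed

lemma ducci_funpow_beyond_length:
  assumes "u \<in> tuples m n" and "n \<le> i"
  shows "(ducci m n ^^ t) u i = 0"
  using assms by (cases t) (auto simp: tuples_def ducci_def)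

lemma ducci_two_power_nilpotent:
  assumes "u \<in> tuples (2 ^ l) (2 ^ k)"
  shows "(ducci (2 ^ l) (2 ^ k) ^^ (2 ^ k * l)) u = (\<lambda>_. 0)"
proof
  fix i
  show "(ducci (2 ^ l) (2 ^ k) ^^ (2 ^ k * l)) u i = 0"
  proof (cases "i < 2 ^ k")
    case True
    have "(2::int) ^ l dvd (seq_ducci ^^ (2 ^ k * l)) (\<lambda>j. int (u (j mod 2 ^ k))) i"
      by (rule periodic_seq_ducci_pow_dvd) simp
    then show ?thesis
      using ducci_funpow_eq_seq_ducci_mod[OF assms True, of "2 ^ k * l"] by simp
  qed (use assms ducci_funpow_beyond_length in auto)
qed

lemma funpow_cycle_eq_fixpoint:
  assumes cycle: "(f ^^ (a + b)) u = (f ^^ a) u" and "b \<ge> 1"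
    and reach: "(f ^^ N) u = z" and fixed: "f z = z"
  shows "(f ^^ a) u = z"
proof -
  have repeat: "(f ^^ (a + b * c)) u = (f ^^ a) u" for c
  proof (induction c)
    case (Suc c)
    have "a + b * Suc c = b * c + (a + b)"
      by simp
    then have "(f ^^ (a + b * Suc c)) u = (f ^^ (b * c)) ((f ^^ (a + b)) u)"
      by (simp only: funpow_add comp_apply)
    also have "\<dots> = (f ^^ (b * c)) ((f ^^ a) u)"
      by (simp only: cycle)
    also have "\<dots> = (f ^^ (a + b * c)) u"
      by (metis add.commute comp_apply funpow_add)
    finally show ?case
      using Suc by simp
  qed simp
  have "(f ^^ t) z = z" for t
    by (induction t) (simp_all add: fixed)
  moreover have "a + b * N = (a + b * N - N) + N"
    using \<open>b \<ge> 1\<close> by (simp add: trans_le_add2)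
  ultimately have "(f ^^ (a + b * N)) u = z"
    by (metis funpow_add comp_apply reach)
  then show ?thesis
    using repeat by simp
qed

lemma ducci_zero: "ducci m n (\<lambda>_. 0) = (\<lambda>_. 0)"
  by (auto simp: ducci_def)

lemma K_eq_zero_if_nilpotent:
  assumes "0 < m"
    and nilpotent: "\<And>u. u \<in> tuples m n \<Longrightarrow> \<exists>N. (ducci m n ^^ N) u = (\<lambda>_. 0)"
  shows "K m n = {(\<lambda>_. 0)}"
proof
  show "K m n \<subseteq> {(\<lambda>_. 0)}"
  proof
    fix v
    assume "v \<in> K m n"
    then obtain u a b where u: "u \<in> tuples m n" and "b \<ge> 1"
      and "v = (ducci m n ^^ (a + b)) u" and v: "v = (ducci m n ^^ a) u"
      unfolding K_def ducci_cycle_def by blast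
    moreover obtain N where "(ducci m n ^^ N) u = (\<lambda>_. 0)"
      using nilpotent[OF u] by blast
    ultimately have "(ducci m n ^^ a) u = (\<lambda>_. 0)"
      using funpow_cycle_eq_fixpoint[where f = "ducci m n"] ducci_zero by metis
    then show "v \<in> {(\<lambda>_. 0)}"
      using v by simp
  qed
  have "(\<lambda>_. 0) \<in> ducci_cycle m n (\<lambda>_. 0)"
    unfolding ducci_cycle_def using ducci_zero[of m n]
    by (auto intro!: exI[of _ 0] exI[of _ 1])
  moreover have "(\<lambda>_. 0) \<in> tuples m n"
    using \<open>0 < m\<close> by (simp add: tuples_def)
  ultimately show "{(\<lambda>_. 0)} \<subseteq> K m n"
    unfolding K_def by blast
qed

theorem corollary1p3:
  fixes k l :: nat
  assumes "k \<ge> 1" and "l \<ge> 1"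
  shows "K (2 ^ l) (2 ^ k) = {(\<lambda>_. 0)}"
  by (rule K_eq_zero_if_nilpotent) (use ducci_two_power_nilpotent in auto)

end
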